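(* Fix an integer $k\ge 2$ (the alphabet size). Say that $[a,b]_n$ is realizable over the $k$-letter alphabet if there is a marking of the $n$-dimensional $k$-ary hypercube in which every vertex is marked exactly $a$ times or exactly $b$ times. Then: (a) if $[a,b]_n$ is realizable, then $[a+1,b+1]_{n+k}$ is realizable; (b) if $[a,b]_n$ is realizable, then $[\ell a,\ell b]_{\ell n}$ is realizable for every positive integer $\ell$.
   Context: The $n$-dimensional $k$-ary hypercube has vertex set $\{0,1,\dots,k-1\}^n$. Its "edges" (lines) are the $nk^{n-1}$ sets of $k$ vertices obtained by fixing all coordinates except one coordinate $i$ and letting coordinate $i$ range over all $k$ values. A marking chooses, for each line, one vertex of that line; the number of times a vertex is marked is the number of lines for which it is the chosen vertex. (For $k=2$ this is an orientation of the $n$-cube, marking the head of each edge, and the mark count is the in-degree.) *)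

theory Defs
  imports Main
begin

text \<open>Vertices of the n-dimensional k-ary hypercube: functions v with v i < k for i < n,
  and v i = 0 for i >= n (canonical extensional representation of \<open>{0..k-1}^n\<close>).\<close>
definition hcube :: "nat \<Rightarrow> nat \<Rightarrow> (nat \<Rightarrow> nat) set" where
  "hcube k n = {v. (\<forall>i<n. v i < k) \<and> (\<forall>i\<ge>n. v i = 0)}"

text \<open>A line is named by its free coordinate i < n and a base vertex w with w i = 0;
  there are exactly n * k^(n-1) of them.\<close>
definition hlines :: "nat \<Rightarrow> nat \<Rightarrow> (nat \<times> (nat \<Rightarrow> nat)) set" where
  "hlines k n = {(i, w). i < n \<and> w \<in> hcube k n \<and> w i = 0}"

definition line_pts :: "nat \<Rightarrow> nat \<times> (nat \<Rightarrow> nat) \<Rightarrow> (nat \<Rightarrow> nat) set" where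
  "line_pts k L = {(snd L)(fst L := j) | j. j < k}"

definition is_marking :: "nat \<Rightarrow> nat \<Rightarrow> (nat \<times> (nat \<Rightarrow> nat) \<Rightarrow> (nat \<Rightarrow> nat)) \<Rightarrow> bool" where
  "is_marking k n m \<longleftrightarrow> (\<forall>L \<in> hlines k n. m L \<in> line_pts k L)"

definition mark_count :: "nat \<Rightarrow> nat \<Rightarrow> (nat \<times> (nat \<Rightarrow> nat) \<Rightarrow> (nat \<Rightarrow> nat)) \<Rightarrow> (nat \<Rightarrow> nat) \<Rightarrow> nat" where
  "mark_count k n m v = card {L \<in> hlines k n. m L = v}"

definition realizable :: "nat \<Rightarrow> nat \<Rightarrow> nat \<Rightarrow> nat \<Rightarrow> bool" where
  "realizable k n a b \<longleftrightarrow>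
     (\<exists>m. is_marking k n m \<and>
          (\<forall>v \<in> hcube k n. mark_count k n m v = a \<or> mark_count k n m v = b))"

end

theory Submission
  imports Defs
begin

(* A marking is the same thing as a "letter rule" g: for the line in direction i
   through the base vertex w (with w i = 0) it names the letter g i w < k that the marked vertex
   carries in coordinate i.  A vertex v is then marked along direction i exactly when
   g i (v(i:=0)) = v i, so its mark count is the number of such directions (rule_count).
   After this translation (realizable_iff_rule) both parts are explicit constructions:
   (a) keep the old rule on the first n coordinates (ignoring the new ones) and let the line in
       new direction n+r mark the vertex whose new coordinates sum to r modulo k; every vertex
       then gains exactly one mark;
   (b) view a vertex of the (l*n)-cube as l blocks of length n, fold it to the n-cube by summing
       the blocks modulo k, and let direction j*n+i imitate direction i of the folded cube; every
       vertex then receives l times the marks of its folded image.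
   Both constructions rest on one modular fact (letter_fixing_sum): in a line the letter that
   makes a coordinate sum hit a prescribed residue is unique and can be written down. *)

section \<open>Markings as letter rules\<close>

definition rule_count :: "(nat \<Rightarrow> (nat \<Rightarrow> nat) \<Rightarrow> nat) \<Rightarrow> nat \<Rightarrow> (nat \<Rightarrow> nat) \<Rightarrow> nat" where
  "rule_count g n v = card {i. i < n \<and> g i (v(i:=0)) = v i}"

text \<open>The lines through a vertex v are the lines (i, v(i:=0)); so v is marked once for each
  direction i whose line chooses v.\<close>
lemma mark_count_directions:
  assumes m: "is_marking k n m" and v: "v \<in> hcube k n"
  shows "mark_count k n m v = card {i. i < n \<and> m (i, v(i:=0)) = v}"
proof -
  have "{L \<in> hlines k n. m L = v} = (\<lambda>i. (i, v(i:=0))) ` {i. i < n \<and> m (i, v(i:=0)) = v}"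
  proof (intro equalityI subsetI)
    fix L assume L: "L \<in> {L \<in> hlines k n. m L = v}"
    obtain i w where Liw: "L = (i, w)" by force
    with L m have "i < n" "w i = 0" "m L \<in> line_pts k L"
      by (auto simp: is_marking_def hlines_def)
    then obtain j where "v = w(i:=j)" using L Liw by (auto simp: line_pts_def)
    with \<open>w i = 0\<close> have "w = v(i:=0)" by auto
    with L Liw \<open>i < n\<close> show "L \<in> (\<lambda>i. (i, v(i:=0))) ` {i. i < n \<and> m (i, v(i:=0)) = v}"
      by auto
  next
    fix L assume "L \<in> (\<lambda>i. (i, v(i:=0))) ` {i. i < n \<and> m (i, v(i:=0)) = v}"
    with v show "L \<in> {L \<in> hlines k n. m L = v}" by (auto simp: hlines_def hcube_def)
  qed
  moreover have "inj_on (\<lambda>i. (i, v(i:=0))) A" for A by (simp add: inj_on_def)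
  ultimately show ?thesis unfolding mark_count_def by (simp add: card_image)
qed

lemma realizable_iff_rule:
  assumes k: "0 < k"
  shows "realizable k n a b \<longleftrightarrow>
    (\<exists>g. (\<forall>i w. g i w < k) \<and> (\<forall>v \<in> hcube k n. rule_count g n v = a \<or> rule_count g n v = b))"
proof
  assume "realizable k n a b"
  then obtain m where m: "is_marking k n m"
    and c: "\<forall>v \<in> hcube k n. mark_count k n m v = a \<or> mark_count k n m v = b"
    by (auto simp: realizable_def)
  define g where "g i w = m (i, w) i mod k" for i w
  have "rule_count g n v = mark_count k n m v" if v: "v \<in> hcube k n" for v
  proof -
    have "g i (v(i:=0)) = v i \<longleftrightarrow> m (i, v(i:=0)) = v" if "i < n" for i
    proof -
      have "(i, v(i:=0)) \<in> hlines k n" using v \<open>i < n\<close> by (auto simp: hlines_def hcube_def)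
      with m obtain j where "j < k" "m (i, v(i:=0)) = v(i:=j)"
        by (auto simp: is_marking_def line_pts_def)
      then show ?thesis by (auto simp: g_def fun_upd_idem_iff)
    qed
    then show ?thesis
      unfolding rule_count_def mark_count_directions[OF m v] by (metis (lifting))
  qed
  moreover have "\<forall>i w. g i w < k" using k by (simp add: g_def)
  ultimately show "\<exists>g. (\<forall>i w. g i w < k) \<and> (\<forall>v \<in> hcube k n. rule_count g n v = a \<or> rule_count g n v = b)"
    using c by metis
next
  assume "\<exists>g. (\<forall>i w. g i w < k) \<and> (\<forall>v \<in> hcube k n. rule_count g n v = a \<or> rule_count g n v = b)"
  then obtain g where g: "\<forall>i w. g i w < k"
    and c: "\<forall>v \<in> hcube k n. rule_count g n v = a \<or> rule_count g n v = b" by blast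
  define m where "m L = (snd L)(fst L := g (fst L) (snd L))" for L
  have m: "is_marking k n m" using g by (auto simp: is_marking_def m_def line_pts_def)
  have "m (i, w(i:=0)) = w \<longleftrightarrow> g i (w(i:=0)) = w i" for i w
    by (auto simp: m_def fun_upd_idem_iff)
  then have "mark_count k n m v = rule_count g n v" if "v \<in> hcube k n" for v
    unfolding mark_count_directions[OF m that] rule_count_def by presburger
  with m c show "realizable k n a b" unfolding realizable_def by (intro exI[of _ m]) auto
qed

lemma letter_fixing_sum:
  fixes k x G t s :: nat
  assumes "0 < k" "x < k" "G < k" and s: "s = t + x"
  shows "x = (G + (k - 1) * t) mod k \<longleftrightarrow> s mod k = G"
proof -
  have kt: "G + (k - 1) * t + t = G + k * t" using \<open>0 < k\<close> by (cases k) auto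
  have cancel: "(y + t) mod k = (z + t) mod k \<longleftrightarrow> y mod k = z mod k" for y z :: nat
    using nat_mod_eq_iff by auto
  have "x = (G + (k - 1) * t) mod k \<longleftrightarrow> x mod k = (G + (k - 1) * t) mod k"
    using \<open>x < k\<close> by simp
  also have "\<dots> \<longleftrightarrow> (x + t) mod k = (G + (k - 1) * t + t) mod k"
    by (rule cancel[symmetric])
  also have "(G + (k - 1) * t + t) mod k = G" unfolding kt using \<open>G < k\<close> by simp
  finally show ?thesis using s by (simp add: add.commute)
qed

lemma sum_split_zeroed:
  fixes v :: "'a \<Rightarrow> 'b::comm_monoid_add"
  assumes "finite A" "inj_on f A" "j \<in> A"
  shows "(\<Sum>j'\<in>A. v (f j')) = (\<Sum>j'\<in>A. (v(f j := 0)) (f j')) + v (f j)"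
proof -
  have "(\<Sum>j'\<in>A - {j}. (v(f j := 0)) (f j')) = (\<Sum>j'\<in>A - {j}. v (f j'))"
    using assms(2,3) by (intro sum.cong) (auto dest: inj_onD)
  with assms(1,3) show ?thesis by (simp add: sum.remove add.commute)
qed

section \<open>Part (a): adding k coordinates adds one mark everywhere\<close>

definition trunc :: "nat \<Rightarrow> (nat \<Rightarrow> nat) \<Rightarrow> (nat \<Rightarrow> nat)" where
  "trunc n v = (\<lambda>j. if j < n then v j else 0)"

definition new_sum :: "nat \<Rightarrow> nat \<Rightarrow> (nat \<Rightarrow> nat) \<Rightarrow> nat" where
  "new_sum k n v = (\<Sum>r<k. v (n + r))"

text \<open>The extended rule: the old rule on the old directions; in direction n+r the vertex whose
  new coordinates sum to r modulo k.\<close>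
definition ext_rule :: "nat \<Rightarrow> nat \<Rightarrow> (nat \<Rightarrow> (nat \<Rightarrow> nat) \<Rightarrow> nat) \<Rightarrow> nat \<Rightarrow> (nat \<Rightarrow> nat) \<Rightarrow> nat" where
  "ext_rule k n g i w =
     (if i < n then g i (trunc n w) else (i - n + (k - 1) * new_sum k n w) mod k)"

lemma trunc_hcube: "v \<in> hcube k (n + r) \<Longrightarrow> trunc n v \<in> hcube k n"
  by (auto simp: hcube_def trunc_def)

lemma ext_rule_old_direction:
  assumes "i < n"
  shows "ext_rule k n g i (v(i:=0)) = v i \<longleftrightarrow> g i ((trunc n v)(i:=0)) = trunc n v i"
proof -
  have "trunc n (v(i:=0)) = (trunc n v)(i:=0)" by (auto simp: trunc_def)
  with assms show ?thesis by (simp add: ext_rule_def trunc_def)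
qed

lemma ext_rule_new_direction:
  assumes k: "0 < k" and v: "v \<in> hcube k (n + k)" and i: "n \<le> i" "i < n + k"
  shows "ext_rule k n g i (v(i:=0)) = v i \<longleftrightarrow> i = n + new_sum k n v mod k"
proof -
  have "v i < k" "i - n < k" using v i by (auto simp: hcube_def)
  have split: "new_sum k n v = new_sum k n (v(i:=0)) + v i"
    using sum_split_zeroed[of "{..<k}" "\<lambda>r. n + r" "i - n" v] i
    by (simp add: new_sum_def)
  have "ext_rule k n g i (v(i:=0)) = v i \<longleftrightarrow>
        v i = (i - n + (k - 1) * new_sum k n (v(i:=0))) mod k"
    using i by (auto simp: ext_rule_def)
  also have "\<dots> \<longleftrightarrow> new_sum k n v mod k = i - n"
    by (rule letter_fixing_sum[OF k \<open>v i < k\<close> \<open>i - n < k\<close> split])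
  also have "\<dots> \<longleftrightarrow> i = n + new_sum k n v mod k" using i by auto
  finally show ?thesis .
qed

lemma ext_rule_count:
  assumes k: "0 < k" and v: "v \<in> hcube k (n + k)"
  shows "rule_count (ext_rule k n g) (n + k) v = rule_count g n (trunc n v) + 1"
proof -
  let ?old = "{i. i < n \<and> g i ((trunc n v)(i:=0)) = trunc n v i}"
  have "{i. i < n + k \<and> ext_rule k n g i (v(i:=0)) = v i} = ?old \<union> {n + new_sum k n v mod k}"
  proof (intro set_eqI)
    fix i show "i \<in> {i. i < n + k \<and> ext_rule k n g i (v(i:=0)) = v i} \<longleftrightarrow>
                i \<in> ?old \<union> {n + new_sum k n v mod k}"
    proof (cases "i < n")
      case True then show ?thesis by (simp add: ext_rule_old_direction)
    next
      case False
      have "n + new_sum k n v mod k < n + k" using k by simp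
      with False ext_rule_new_direction[OF k v, of i g] show ?thesis by auto
    qed
  qed
  moreover have "n + new_sum k n v mod k \<notin> ?old" by simp
  ultimately show ?thesis by (simp add: rule_count_def)
qed

lemma realizable_add_dimensions:
  assumes "0 < k" "realizable k n a b"
  shows "realizable k (n + k) (a + 1) (b + 1)"
proof -
  obtain g where g: "\<forall>i w. g i w < k"
    and c: "\<forall>v \<in> hcube k n. rule_count g n v = a \<or> rule_count g n v = b"
    using assms realizable_iff_rule by blast
  have "\<forall>i w. ext_rule k n g i w < k" using g \<open>0 < k\<close> by (simp add: ext_rule_def)
  moreover have "\<forall>v \<in> hcube k (n + k). rule_count (ext_rule k n g) (n + k) v = a + 1
                                       \<or> rule_count (ext_rule k n g) (n + k) v = b + 1"
    using c ext_rule_count[OF \<open>0 < k\<close>] trunc_hcube by fastforce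
  ultimately show ?thesis using realizable_iff_rule[OF \<open>0 < k\<close>] by blast
qed

section \<open>Part (b): l blocks multiply all mark counts by l\<close>

definition block_sum :: "nat \<Rightarrow> nat \<Rightarrow> (nat \<Rightarrow> nat) \<Rightarrow> nat \<Rightarrow> nat" where
  "block_sum n l v i = (\<Sum>j<l. v (j * n + i))"

definition fold_vertex :: "nat \<Rightarrow> nat \<Rightarrow> nat \<Rightarrow> (nat \<Rightarrow> nat) \<Rightarrow> (nat \<Rightarrow> nat)" where
  "fold_vertex k n l v = (\<lambda>i. if i < n then block_sum n l v i mod k else 0)"

text \<open>Direction d of the big cube imitates direction d mod n of the folded cube.\<close>
definition fold_rule :: "nat \<Rightarrow> nat \<Rightarrow> nat \<Rightarrow> (nat \<Rightarrow> (nat \<Rightarrow> nat) \<Rightarrow> nat) \<Rightarrow> nat \<Rightarrow> (nat \<Rightarrow> nat) \<Rightarrow> nat" where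
  "fold_rule k n l g d w =
     (g (d mod n) ((fold_vertex k n l w)(d mod n := 0)) + (k - 1) * block_sum n l w (d mod n)) mod k"

lemma fold_vertex_hcube: "0 < k \<Longrightarrow> fold_vertex k n l v \<in> hcube k n"
  by (auto simp: hcube_def fold_vertex_def)

lemma fold_vertex_local:
  assumes "i < n"
  shows "(fold_vertex k n l (v(j * n + i := 0)))(i := 0) = (fold_vertex k n l v)(i := 0)"
proof
  fix i'
  have "block_sum n l (v(j * n + i := 0)) i' = block_sum n l v i'" if "i' < n" "i' \<noteq> i"
    unfolding block_sum_def
  proof (intro sum.cong refl)
    fix j' have "j' * n + i' \<noteq> j * n + i"
      using that assms by (metis mod_mult_self3 mod_less)
    then show "(v(j * n + i := 0)) (j' * n + i') = v (j' * n + i')" by simp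
  qed
  then show "((fold_vertex k n l (v(j * n + i := 0)))(i := 0)) i' = ((fold_vertex k n l v)(i := 0)) i'"
    by (auto simp: fold_vertex_def)
qed

lemma block_position_bound:
  fixes i j n l :: nat
  assumes "i < n" "j < l"
  shows "j * n + i < l * n"
proof -
  have "j * n + i < Suc j * n" using \<open>i < n\<close> by simp
  also have "\<dots> \<le> l * n" using \<open>j < l\<close> by (intro mult_le_mono1) simp
  finally show ?thesis .
qed

lemma fold_rule_direction:
  assumes k: "0 < k" and v: "v \<in> hcube k (l * n)" and "i < n" "j < l"
  and g: "\<forall>i w. g i w < k"
  shows "fold_rule k n l g (j * n + i) (v(j * n + i := 0)) = v (j * n + i) \<longleftrightarrow>
         g i ((fold_vertex k n l v)(i := 0)) = fold_vertex k n l v i"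
proof -
  let ?d = "j * n + i" and ?G = "g i ((fold_vertex k n l v)(i := 0))"
  have "v ?d < k" using v block_position_bound[OF \<open>i < n\<close> \<open>j < l\<close>] by (auto simp: hcube_def)
  have "?G < k" using g by blast
  have "inj_on (\<lambda>j'. j' * n + i) {..<l}" using \<open>i < n\<close> by (simp add: inj_on_def)
  then have split: "block_sum n l v i = block_sum n l (v(?d:=0)) i + v ?d"
    using sum_split_zeroed[of "{..<l}" _ j v] \<open>j < l\<close> by (simp add: block_sum_def)
  have "fold_rule k n l g ?d (v(?d:=0)) = (?G + (k - 1) * block_sum n l (v(?d:=0)) i) mod k"
    using fold_vertex_local[OF \<open>i < n\<close>, of k l v j] \<open>i < n\<close> by (simp add: fold_rule_def)
  then have "fold_rule k n l g ?d (v(?d:=0)) = v ?d \<longleftrightarrow>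
             v ?d = (?G + (k - 1) * block_sum n l (v(?d:=0)) i) mod k"
    by auto
  also have "\<dots> \<longleftrightarrow> block_sum n l v i mod k = ?G"
    by (rule letter_fixing_sum[OF k \<open>v ?d < k\<close> \<open>?G < k\<close> split])
  also have "\<dots> \<longleftrightarrow> ?G = fold_vertex k n l v i"
    using \<open>i < n\<close> by (auto simp: fold_vertex_def)
  finally show ?thesis .
qed

text \<open>Counting the positions below l*n whose residue modulo n satisfies Q: each residue
  occurs once in each of the l blocks.\<close>
lemma card_residue_blocks:
  "card {d. d < l * n \<and> Q (d mod n)} = l * card {i. i < n \<and> Q i}"
proof -
  let ?pos = "\<lambda>(j, i). j * n + i"
  have "{d. d < l * n \<and> Q (d mod n)} = ?pos ` ({..<l} \<times> {i. i < n \<and> Q i})"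
  proof (intro equalityI subsetI)
    fix d assume d: "d \<in> {d. d < l * n \<and> Q (d mod n)}"
    then have "0 < n" by (cases n) auto
    then have "d div n < l" "d mod n < n"
      using d by (simp_all add: div_less_iff_less_mult mult.commute)
    moreover have "d = ?pos (d div n, d mod n)" by simp
    ultimately show "d \<in> ?pos ` ({..<l} \<times> {i. i < n \<and> Q i})"
      using d by blast
  next
    fix d assume "d \<in> ?pos ` ({..<l} \<times> {i. i < n \<and> Q i})"
    then obtain j i where "d = j * n + i" "j < l" "i < n" "Q i" by auto
    then show "d \<in> {d. d < l * n \<and> Q (d mod n)}" using block_position_bound by simp
  qed
  moreover have "inj_on ?pos ({..<l} \<times> {i. i < n \<and> Q i})"
  proof (rule inj_onI, clarsimp)
    fix j i j' i' assume "i < n" "i' < n" "j * n + i = j' * n + i'"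
    then have "(j * n + i) mod n = (j' * n + i') mod n" "(j * n + i) div n = (j' * n + i') div n"
      by simp_all
    with \<open>i < n\<close> \<open>i' < n\<close> show "j = j' \<and> i = i'" by simp
  qed
  ultimately show ?thesis by (simp add: card_image card_cartesian_product)
qed

lemma fold_rule_count:
  assumes k: "0 < k" and v: "v \<in> hcube k (l * n)" and g: "\<forall>i w. g i w < k"
  shows "rule_count (fold_rule k n l g) (l * n) v = l * rule_count g n (fold_vertex k n l v)"
proof -
  let ?marks = "\<lambda>i. g i ((fold_vertex k n l v)(i := 0)) = fold_vertex k n l v i"
  have "fold_rule k n l g d (v(d:=0)) = v d \<longleftrightarrow> ?marks (d mod n)" if "d < l * n" for d
  proof -
    have "0 < n" using that by (cases n) auto
    then have "d mod n < n" "d div n < l"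
      using that by (simp_all add: div_less_iff_less_mult mult.commute)
    from fold_rule_direction[OF k v this g] show ?thesis by simp
  qed
  then have "{d. d < l * n \<and> fold_rule k n l g d (v(d:=0)) = v d} = {d. d < l * n \<and> ?marks (d mod n)}"
    by blast
  then show ?thesis unfolding rule_count_def using card_residue_blocks[of l n ?marks] by simp
qed

lemma realizable_multiply:
  assumes "0 < k" "realizable k n a b"
  shows "realizable k (l * n) (l * a) (l * b)"
proof -
  obtain g where g: "\<forall>i w. g i w < k"
    and c: "\<forall>v \<in> hcube k n. rule_count g n v = a \<or> rule_count g n v = b"
    using assms realizable_iff_rule by blast
  have "\<forall>i w. fold_rule k n l g i w < k" using \<open>0 < k\<close> by (simp add: fold_rule_def)
  moreover have "\<forall>v \<in> hcube k (l * n). rule_count (fold_rule k n l g) (l * n) v = l * a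
                                       \<or> rule_count (fold_rule k n l g) (l * n) v = l * b"
    using c fold_rule_count[OF \<open>0 < k\<close> _ g] fold_vertex_hcube[OF \<open>0 < k\<close>] by fastforce
  ultimately show ?thesis using realizable_iff_rule[OF \<open>0 < k\<close>] by blast
qed

theorem theorem5:
  fixes k n a b :: nat
  assumes "k \<ge> 2"
  shows "(realizable k n a b \<longrightarrow> realizable k (n + k) (a + 1) (b + 1))
     \<and> (\<forall>l::nat. l > 0 \<longrightarrow> realizable k n a b \<longrightarrow> realizable k (l * n) (l * a) (l * b))"
proof -
  have "0 < k" using assms by simp
  then show ?thesis using realizable_add_dimensions realizable_multiply by blast
qed

end
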